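(* Let $f$ satisfy $(\mathcal A)$, let $t_0>0$ and let $\tau:[t_0,+\infty[\to\,]0,+\infty[$ be twice continuously differentiable with $\dot\tau(t)>0$ for all $t$ and $\lim_{t\to+\infty}\tau(t)=+\infty$. Let $x:[t_0,+\infty[\to\mathcal H$ be a twice continuously differentiable solution of $$\ddot x(t)+\frac{2\dot\tau(t)^2-\tau(t)\ddot\tau(t)}{\tau(t)\dot\tau(t)}\dot x(t)+\frac{\dot\tau(t)^2}{\tau(t)}\nabla f\Big(x(t)+\frac{\tau(t)}{\dot\tau(t)}\dot x(t)\Big)=0 .$$ Then $f(x(t))-\inf_{\mathcal H}f=o\big(\ln(\tau(t))/\tau(t)\big)$ as $t\to+\infty$, and $x(t)$ converges weakly as $t\to+\infty$ to an element of $S=\operatorname{argmin} f$. If moreover there exist $\theta>0$ and $C_1>0$ such that $\tau(t)\ge C_1(t-t_0)^\theta$ for all sufficiently large $t$, then $f(x(t))-\inf_{\mathcal H}f=o\big(\ln(t)/t^\theta\big)$ as $t\to+\infty$.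
   Context: $\mathcal H$ is a real Hilbert space. Assumption $(\mathcal A)$: $f:\mathcal H\to\mathbb R$ is convex and continuously differentiable, $S=\operatorname{argmin}_{\mathcal H} f\neq\emptyset$, and $\nabla f$ is Lipschitz continuous on bounded subsets of $\mathcal H$. *)

theory Defs
  imports "HOL-Analysis.Analysis" "HOL-Library.Landau_Symbols"
begin

definition argmin_set :: "('a \<Rightarrow> real) \<Rightarrow> 'a set" where
  "argmin_set f = {x. \<forall>y. f x \<le> f y}"

definition lipschitz_on_bounded :: "('a::real_normed_vector \<Rightarrow> 'b::real_normed_vector) \<Rightarrow> bool" where
  "lipschitz_on_bounded g \<longleftrightarrow>
     (\<forall>B. bounded B \<longrightarrow> (\<exists>L. \<forall>u\<in>B. \<forall>v\<in>B. norm (g u - g v) \<le> L * norm (u - v)))"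

definition assumption_A :: "('a::{real_inner,complete_space} \<Rightarrow> real) \<Rightarrow> ('a \<Rightarrow> 'a) \<Rightarrow> bool" where
  "assumption_A f gradf \<longleftrightarrow>
     convex_on UNIV f \<and>
     (\<forall>z. (f has_derivative (\<lambda>h. gradf z \<bullet> h)) (at z)) \<and>
     continuous_on UNIV gradf \<and>
     argmin_set f \<noteq> {} \<and>
     lipschitz_on_bounded gradf"

definition weakly_tendsto_at_top :: "(real \<Rightarrow> 'a::real_inner) \<Rightarrow> 'a \<Rightarrow> bool" where
  "weakly_tendsto_at_top x z \<longleftrightarrow> (\<forall>y. ((\<lambda>t. x t \<bullet> y) \<longlongrightarrow> z \<bullet> y) at_top)"

end

theory Submission
  imports Defs "HOL-Real_Asymp.Real_Asymp"
begin

text \<open>With \<open>z = x + (\<tau>/\<tau>') x'\<close> the equation becomes \<open>z' = -\<tau>' \<nabla>f(z)\<close>, a gradient flow run at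
  speed \<open>\<tau>'\<close>, and \<open>(\<tau> x)' = \<tau>' z\<close>, so \<open>x\<close> is a \<open>\<tau>'\<close>-weighted average of \<open>z\<close>. Along the flow the
  distance to every minimizer decreases and \<open>\<tau> (f(z) - min f) \<rightarrow> 0\<close>; convexity then gives
  \<open>(\<tau> (f(x) - min f))' \<le> \<tau>' (f(z) - min f) = o(\<tau>'/\<tau>)\<close>, which integrates to \<open>o(ln \<tau>)\<close>. Weak
  convergence of \<open>z\<close> is Opial's argument, and averaging passes it on to \<open>x\<close>. The polynomial rate
  follows because \<open>ln s / s\<close> decreases for \<open>s \<ge> e\<close>.\<close>

section \<open>Monotonicity and averages of real functions\<close>

lemma DERIV_within_nonpos_imp_nonincreasing:
  fixes F F' :: "real \<Rightarrow> real"
  assumes "a \<le> s" "s \<le> t"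
    and deriv: "\<And>u. s \<le> u \<Longrightarrow> u \<le> t \<Longrightarrow> (F has_real_derivative F' u) (at u within {a..})"
    and nonpos: "\<And>u. s \<le> u \<Longrightarrow> u \<le> t \<Longrightarrow> F' u \<le> 0"
  shows "F t \<le> F s"
proof (rule DERIV_nonpos_imp_decreasing_open[OF \<open>s \<le> t\<close>])
  fix u assume u: "s < u" "u < t"
  have "at u within {a..} = at u"
    by (rule at_within_interior) (use u assms(1) in auto)
  then show "\<exists>y. DERIV F u :> y \<and> y \<le> 0"
    using deriv[of u] nonpos[of u] u by auto
next
  show "continuous_on {s..t} F"
    unfolding continuous_on_eq_continuous_within
  proof
    fix u assume u: "u \<in> {s..t}"
    have "continuous (at u within {a..}) F"
      using deriv[of u] u by (auto intro: DERIV_continuous)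
    then show "continuous (at u within {s..t}) F"
      by (rule continuous_within_subset) (use assms(1) in auto)
  qed
qed

lemma DERIV_within_le_imp_increment_le:
  fixes F F' G G' :: "real \<Rightarrow> real"
  assumes "a \<le> s" "s \<le> t"
    and dF: "\<And>u. s \<le> u \<Longrightarrow> u \<le> t \<Longrightarrow> (F has_real_derivative F' u) (at u within {a..})"
    and dG: "\<And>u. s \<le> u \<Longrightarrow> u \<le> t \<Longrightarrow> (G has_real_derivative G' u) (at u within {a..})"
    and le: "\<And>u. s \<le> u \<Longrightarrow> u \<le> t \<Longrightarrow> F' u \<le> G' u"
  shows "F t - F s \<le> G t - G s"
proof -
  have "(\<lambda>u. F u - G u) t \<le> (\<lambda>u. F u - G u) s"
    by (rule DERIV_within_nonpos_imp_nonincreasing[OF assms(1,2), where F'="\<lambda>u. F' u - G' u"])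
       (auto intro!: DERIV_diff dF dG simp: le)
  then show ?thesis by simp
qed

lemma nonincreasing_bounded_below_tendsto_at_top:
  fixes h :: "real \<Rightarrow> real"
  assumes antimono: "\<And>s t. a \<le> s \<Longrightarrow> s \<le> t \<Longrightarrow> h t \<le> h s"
    and bounded: "\<And>t. a \<le> t \<Longrightarrow> b \<le> h t"
  shows "\<exists>L. (h \<longlongrightarrow> L) at_top \<and> (\<forall>t\<ge>a. L \<le> h t)"
proof -
  define L where "L = Inf (h ` {a..})"
  have "bdd_below (h ` {a..})" using bounded by (auto simp: bdd_below_def)
  then have L_le: "L \<le> h t" if "a \<le> t" for t
    using that by (auto simp: L_def intro!: cInf_lower)
  have "(h \<longlongrightarrow> L) at_top"
  proof (rule order_tendstoI)
    fix y assume "y < L"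
    show "eventually (\<lambda>t. y < h t) at_top"
      using eventually_ge_at_top[of a] by (rule eventually_mono) (use L_le \<open>y < L\<close> in force)
  next
    fix y assume "L < y"
    then obtain s where s: "a \<le> s" "h s < y"
      using cInf_lessD[of "h ` {a..}" y] by (auto simp: L_def)
    show "eventually (\<lambda>t. h t < y) at_top"
      using eventually_ge_at_top[of s] by (rule eventually_mono) (use antimono s in force)
  qed
  with L_le show ?thesis by blast
qed

lemma weighted_average_eventually_less:
  fixes a b \<tau> \<tau>' :: "real \<Rightarrow> real"
  assumes deriv: "\<And>t. t \<ge> t0 \<Longrightarrow> ((\<lambda>s. \<tau> s * a s) has_real_derivative \<tau>' t * b t) (at t within {t0..})"
    and tau_deriv: "\<And>t. t \<ge> t0 \<Longrightarrow> (\<tau> has_real_derivative \<tau>' t) (at t within {t0..})"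
    and tau_pos: "\<And>t. t \<ge> t0 \<Longrightarrow> \<tau> t > 0" and tau'_pos: "\<And>t. t \<ge> t0 \<Longrightarrow> \<tau>' t > 0"
    and tau_at_top: "filterlim \<tau> at_top at_top"
    and b_le: "eventually (\<lambda>t. b t \<le> c) at_top" and "\<epsilon> > 0"
  shows "eventually (\<lambda>t. a t < c + \<epsilon>) at_top"
proof -
  obtain N where N: "\<And>t. t \<ge> N \<Longrightarrow> b t \<le> c"
    using b_le by (auto simp: eventually_at_top_linorder)
  define T where "T = max N t0"
  define K where "K = \<tau> T * a T - c * \<tau> T"
  have "eventually (\<lambda>t. \<tau> t \<ge> (\<bar>K\<bar> + 1) / \<epsilon>) at_top"
    using tau_at_top by (simp add: filterlim_at_top)
  then show ?thesis using eventually_ge_at_top[of T]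
  proof eventually_elim
    case (elim t)
    have T: "t0 \<le> T" "T \<le> t" using elim by (auto simp: T_def)
    have "\<tau> t * a t - \<tau> T * a T \<le> c * \<tau> t - c * \<tau> T"
    proof (rule DERIV_within_le_imp_increment_le[OF T])
      fix u assume u: "T \<le> u" "u \<le> t"
      then have "u \<ge> t0" "u \<ge> N" by (auto simp: T_def)
      then show "((\<lambda>s. \<tau> s * a s) has_real_derivative \<tau>' u * b u) (at u within {t0..})"
        and "((\<lambda>s. c * \<tau> s) has_real_derivative c * \<tau>' u) (at u within {t0..})"
        and "\<tau>' u * b u \<le> c * \<tau>' u"
        using deriv tau_deriv N tau'_pos by (auto intro: DERIV_cmult simp: mult.commute mult_left_mono)
    qed
    moreover have "\<tau> t > 0" using tau_pos T by simp
    moreover have "K < \<epsilon> * \<tau> t" using elim(1) \<open>\<epsilon> > 0\<close> by (simp add: field_simps)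
    ultimately have "\<tau> t * a t < \<tau> t * (c + \<epsilon>)" by (simp add: K_def algebra_simps)
    with \<open>\<tau> t > 0\<close> show ?case by simp
  qed
qed

lemma weighted_average_tendsto:
  fixes a b \<tau> \<tau>' :: "real \<Rightarrow> real"
  assumes deriv: "\<And>t. t \<ge> t0 \<Longrightarrow> ((\<lambda>s. \<tau> s * a s) has_real_derivative \<tau>' t * b t) (at t within {t0..})"
    and tau_deriv: "\<And>t. t \<ge> t0 \<Longrightarrow> (\<tau> has_real_derivative \<tau>' t) (at t within {t0..})"
    and tau_pos: "\<And>t. t \<ge> t0 \<Longrightarrow> \<tau> t > 0" and tau'_pos: "\<And>t. t \<ge> t0 \<Longrightarrow> \<tau>' t > 0"
    and tau_at_top: "filterlim \<tau> at_top at_top"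
    and b_lim: "(b \<longlongrightarrow> \<beta>) at_top"
  shows "(a \<longlongrightarrow> \<beta>) at_top"
proof (rule order_tendstoI)
  fix y assume "\<beta> < y"
  then have "eventually (\<lambda>t. b t < (\<beta> + y) / 2) at_top"
    by (intro order_tendstoD(2)[OF b_lim]) simp
  then have "eventually (\<lambda>t. b t \<le> (\<beta> + y) / 2) at_top"
    by (auto elim: eventually_mono)
  from weighted_average_eventually_less[OF deriv tau_deriv tau_pos tau'_pos tau_at_top this,
      of "(y - \<beta>) / 2"] \<open>\<beta> < y\<close>
  show "eventually (\<lambda>t. a t < y) at_top" by (simp add: field_simps)
next
  fix y assume "y < \<beta>"
  have deriv': "((\<lambda>s. \<tau> s * - a s) has_real_derivative \<tau>' t * - b t) (at t within {t0..})"
    if "t \<ge> t0" for t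
    using DERIV_minus[OF deriv[OF that]] by simp
  from \<open>y < \<beta>\<close> have "eventually (\<lambda>t. b t > (\<beta> + y) / 2) at_top"
    by (intro order_tendstoD(1)[OF b_lim]) simp
  then have "eventually (\<lambda>t. - b t \<le> - ((\<beta> + y) / 2)) at_top"
    by (auto elim: eventually_mono)
  from weighted_average_eventually_less[OF deriv' tau_deriv tau_pos tau'_pos tau_at_top this,
      of "(\<beta> - y) / 2"] \<open>y < \<beta>\<close>
  show "eventually (\<lambda>t. y < a t) at_top" by (auto elim!: eventually_mono simp: field_simps)
qed

lemma ln_div_bigo_of_powr_lower_bound:
  fixes \<tau> :: "real \<Rightarrow> real"
  assumes lower: "eventually (\<lambda>t. \<tau> t \<ge> C * (t - t0) powr \<theta>) at_top"
    and "\<theta> > 0" "C > 0"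
  shows "(\<lambda>t. ln (\<tau> t) / \<tau> t) \<in> O(\<lambda>t. ln t / t powr \<theta>)"
proof -
  define w where "w t = C * (t - t0) powr \<theta>" for t
  have "filterlim w at_top at_top" unfolding w_def using assms(2,3) by real_asymp
  then have "eventually (\<lambda>t. w t \<ge> exp 1) at_top" by (simp add: filterlim_at_top)
  then have "eventually (\<lambda>t. norm (ln (\<tau> t) / \<tau> t) \<le> 1 * norm (ln (w t) / w t)) at_top"
    using lower
  proof eventually_elim
    case (elim t)
    then have "w t \<le> \<tau> t" by (simp add: w_def)
    moreover have "w t > 0" using elim(1) exp_gt_zero[of 1] by linarith
    ultimately have "\<tau> t > 0" "ln (\<tau> t) \<ge> 1" "ln (w t) \<ge> 1"
      using elim(1) by (auto simp: ln_ge_iff)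
    with ln_x_over_x_mono[OF elim(1) \<open>w t \<le> \<tau> t\<close>] \<open>w t > 0\<close> show ?case by simp
  qed
  moreover have "(\<lambda>t. ln (w t) / w t) \<in> O(\<lambda>t. ln t / t powr \<theta>)"
    unfolding w_def using assms(2,3) by real_asymp
  ultimately show ?thesis by (rule landau_o.big_trans[OF bigoI])
qed


section \<open>Convex functions and closed convex sets in Hilbert spaces\<close>

lemma convex_on_gradient_inequality:
  fixes f :: "'a::real_inner \<Rightarrow> real"
  assumes convex: "convex_on UNIV f" and deriv: "(f has_derivative (\<lambda>h. g \<bullet> h)) (at u)"
  shows "f u + g \<bullet> (v - u) \<le> f v"
proof -
  let ?h = "\<lambda>s::real. f (u + s *\<^sub>R (v - u))"
  have "convex_on UNIV ?h"
  proof (rule convex_onI)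
    fix t x y :: real assume t: "0 < t" "t < 1"
    have "u + ((1 - t) * x + t * y) *\<^sub>R (v - u)
        = (1 - t) *\<^sub>R (u + x *\<^sub>R (v - u)) + t *\<^sub>R (u + y *\<^sub>R (v - u))"
      by (simp add: algebra_simps)
    then show "?h ((1 - t) *\<^sub>R x + t *\<^sub>R y) \<le> (1 - t) * ?h x + t * ?h y"
      using convex_onD[OF convex, of t "u + x *\<^sub>R (v - u)" "u + y *\<^sub>R (v - u)"] t by simp
  qed simp
  moreover have "((\<lambda>s::real. u + s *\<^sub>R (v - u)) has_derivative (\<lambda>s. s *\<^sub>R (v - u))) (at 0)"
    by (auto intro!: derivative_eq_intros)
  then have "(?h has_derivative (\<lambda>s. g \<bullet> (s *\<^sub>R (v - u)))) (at 0)"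
    by (rule has_derivative_compose) (use deriv in simp)
  then have "(?h has_real_derivative g \<bullet> (v - u)) (at 0 within UNIV)"
    unfolding has_field_derivative_def by (rule has_derivative_eq_rhs) (auto simp: mult.commute)
  ultimately have "?h 1 - ?h 0 \<ge> g \<bullet> (v - u) * (1 - 0)"
    by (intro convex_on_imp_above_tangent) auto
  then show ?thesis by simp
qed

lemma convex_on_sublevel_convex:
  assumes "convex_on UNIV f"
  shows "convex {v. f v \<le> c}"
  unfolding convex_alt
proof (intro ballI allI impI)
  fix a b and u :: real
  assume "a \<in> {v. f v \<le> c}" "b \<in> {v. f v \<le> c}" "0 \<le> u \<and> u \<le> 1"
  then have "f ((1 - u) *\<^sub>R a + u *\<^sub>R b) \<le> (1 - u) * c + u * c"
    using convex_onD[OF assms, of u a b]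
    by (smt (verit) mult_left_mono mem_Collect_eq UNIV_I)
  then show "(1 - u) *\<^sub>R a + u *\<^sub>R b \<in> {v. f v \<le> c}" by (simp add: algebra_simps)
qed

lemma norm_diff_parallelogram:
  fixes x y :: "'a::real_inner"
  shows "(norm (x - y))\<^sup>2 = 2 * (norm x)\<^sup>2 + 2 * (norm y)\<^sup>2 - (norm (x + y))\<^sup>2"
  by (simp add: power2_norm_eq_inner algebra_simps inner_commute)

text \<open>The distances \<open>d n\<close> from the origin to \<open>K n\<close> increase to some \<open>D\<close>, and by the
  parallelogram law almost nearest points of the \<open>K n\<close> form a Cauchy sequence.\<close>

lemma decseq_closed_convex_Inter_nonempty:
  fixes K :: "nat \<Rightarrow> 'a::{real_inner,complete_space} set"
  assumes dec: "decseq K" and closed: "\<And>n. closed (K n)" and convex: "\<And>n. convex (K n)"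
    and nonempty: "\<And>n. K n \<noteq> {}" and bounded: "bounded (K 0)"
  shows "(\<Inter>n. K n) \<noteq> {}"
proof -
  obtain B where B: "\<And>n v. v \<in> K n \<Longrightarrow> norm v \<le> B"
    using bounded decseqD[OF dec, of 0] by (auto simp: bounded_iff)
  define d where "d n = Inf (norm ` K n)" for n
  have d_le: "d n \<le> norm v" if "v \<in> K n" for n v
    unfolding d_def using that by (auto intro!: cInf_lower bdd_belowI2[where m=0])
  have d_nonneg: "0 \<le> d n" for n
    unfolding d_def using nonempty[of n] by (auto intro!: cInf_greatest)
  have "incseq d"
    unfolding incseq_def d_def
    by (auto intro!: cInf_mono bdd_belowI2[where m=0] dest: decseqD[OF dec] simp: nonempty)
  moreover have d_le_B: "d n \<le> B" for n
    using nonempty[of n] d_le B by (meson all_not_in_conv order_trans)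
  ultimately obtain D where d_lim: "d \<longlonglongrightarrow> D" and d_le_D: "\<And>n. d n \<le> D"
    using incseq_convergent[of d B] by blast
  define e where "e n = 1 / (real n + 1)" for n
  have e_pos: "0 < e n" for n by (simp add: e_def)
  have e_antimono: "e m \<le> e n" if "n \<le> m" for n m
    unfolding e_def using that by (simp add: frac_le)
  have "\<exists>v \<in> K n. norm v < d n + e n" for n
    using cInf_lessD[of "norm ` K n" "d n + e n"] nonempty[of n] e_pos[of n] by (auto simp: d_def)
  then obtain a where a_in: "\<And>n. a n \<in> K n" and a_norm: "\<And>n. norm (a n) < d n + e n"
    by metis
  define r where "r n = 4 * ((D + e n)\<^sup>2 - (d n)\<^sup>2)" for n
  have a_dist: "(norm (a n - a m))\<^sup>2 \<le> r n" if "n \<le> m" for n m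
  proof -
    have am: "a m \<in> K n" using a_in[of m] decseqD[OF dec that] by auto
    have "(1/2) *\<^sub>R a n + (1/2) *\<^sub>R a m \<in> K n"
      by (rule convexD[OF convex a_in am]) auto
    then have "d n \<le> norm ((1/2) *\<^sub>R (a n + a m))"
      using d_le by (simp add: scaleR_add_right)
    then have "(2 * d n)\<^sup>2 \<le> (norm (a n + a m))\<^sup>2"
      using d_nonneg[of n] by (intro power_mono) auto
    moreover have "(norm (a n))\<^sup>2 \<le> (D + e n)\<^sup>2" "(norm (a m))\<^sup>2 \<le> (D + e n)\<^sup>2"
      using a_norm[of n] a_norm[of m] d_le_D[of n] d_le_D[of m] e_antimono[OF that]
      by (auto intro!: power_mono)
    ultimately show ?thesis
      unfolding r_def norm_diff_parallelogram by (simp add: power_mult_distrib)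
  qed
  have "e \<longlonglongrightarrow> 0"
    unfolding e_def using LIMSEQ_ignore_initial_segment[OF lim_1_over_n, of 1]
    by (simp add: add.commute)
  then have "r \<longlonglongrightarrow> 4 * ((D + 0)\<^sup>2 - D\<^sup>2)"
    unfolding r_def[abs_def] by (intro tendsto_intros d_lim)
  then have r_lim: "r \<longlonglongrightarrow> 0" by simp
  have "Cauchy a"
  proof (rule metric_CauchyI)
    fix \<epsilon> :: real assume "\<epsilon> > 0"
    then obtain M where M: "\<And>n. n \<ge> M \<Longrightarrow> r n < \<epsilon>\<^sup>2"
      using order_tendstoD(2)[OF r_lim, of "\<epsilon>\<^sup>2"] by (auto simp: eventually_sequentially)
    have "dist (a m) (a n) < \<epsilon>" if "m \<ge> M" "n \<ge> M" for m n
    proof -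
      have "(dist (a m) (a n))\<^sup>2 < \<epsilon>\<^sup>2"
        using a_dist[of n m] a_dist[of m n] M that
        by (cases "n \<le> m") (force simp: dist_norm norm_minus_commute)+
      with \<open>\<epsilon> > 0\<close> show ?thesis by (simp add: power_less_imp_less_base)
    qed
    then show "\<exists>M. \<forall>m\<ge>M. \<forall>n\<ge>M. dist (a m) (a n) < \<epsilon>" by blast
  qed
  then obtain A where "a \<longlonglongrightarrow> A" using Cauchy_convergent_iff convergent_def by blast
  have "A \<in> K n" for n
  proof (rule Lim_in_closed_set[OF closed _ _ \<open>a \<longlonglongrightarrow> A\<close>])
    show "eventually (\<lambda>m. a m \<in> K n) sequentially"
      using eventually_ge_at_top[of n] by eventually_elim (use a_in dec in \<open>auto dest: decseqD\<close>)
  qed simp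
  then show ?thesis by blast
qed

text \<open>Closed convex sets are weakly closed, so in a Hilbert space every weak cluster point of \<open>u\<close>
  is a convex cluster point. This notion replaces weak cluster points, which cannot be expressed
  without a weak topology.\<close>

definition convex_cluster_point :: "(nat \<Rightarrow> 'a::real_normed_vector) \<Rightarrow> 'a \<Rightarrow> bool" where
  "convex_cluster_point u A \<longleftrightarrow>
     (\<forall>C. closed C \<longrightarrow> convex C \<longrightarrow> eventually (\<lambda>n. u n \<in> C) sequentially \<longrightarrow> A \<in> C)"

lemma bounded_imp_ex_convex_cluster_point:
  fixes u :: "nat \<Rightarrow> 'a::{real_inner,complete_space}"
  assumes "bounded (range u)"
  shows "\<exists>A. convex_cluster_point u A"
proof -
  define K where "K n = closure (convex hull (u ` {n..}))" for n
  have "(\<Inter>n. K n) \<noteq> {}"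
  proof (rule decseq_closed_convex_Inter_nonempty)
    show "decseq K"
      unfolding decseq_def K_def by (intro allI impI closure_mono hull_mono image_mono) auto
    show "bounded (K 0)"
      unfolding K_def by (intro bounded_closure bounded_convex_hull bounded_subset[OF assms]) auto
    show "K n \<noteq> {}" for n
      unfolding K_def using closure_subset hull_subset by fastforce
  qed (auto simp: K_def convex_closure)
  then obtain A where A: "\<And>n. A \<in> K n" by blast
  have "A \<in> C" if C: "closed C" "convex C" "eventually (\<lambda>n. u n \<in> C) sequentially" for C
  proof -
    obtain N where "\<And>n. n \<ge> N \<Longrightarrow> u n \<in> C"
      using C(3) by (auto simp: eventually_sequentially)
    then have "K N \<subseteq> C"
      unfolding K_def by (intro closure_minimal hull_minimal C(1,2)) auto
    with A show ?thesis by blast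
  qed
  then show ?thesis unfolding convex_cluster_point_def by blast
qed

lemma convex_cluster_point_le_limit:
  assumes "convex_cluster_point u A" and "convex_on UNIV g" "continuous_on UNIV g"
    and "((\<lambda>n. g (u n)) \<longlongrightarrow> c) sequentially"
  shows "g A \<le> c"
proof (rule field_le_epsilon)
  fix e :: real assume "e > 0"
  have "closed {v. g v \<le> c + e}"
    by (rule closed_Collect_le) (use assms(3) in auto)
  moreover have "eventually (\<lambda>n. u n \<in> {v. g v \<le> c + e}) sequentially"
    using order_tendstoD(2)[OF assms(4), of "c + e"] \<open>e > 0\<close> by (auto elim: eventually_mono)
  ultimately show "g A \<le> c + e"
    using assms(1) convex_on_sublevel_convex[OF assms(2)] unfolding convex_cluster_point_def by blast
qed

lemma convex_cluster_point_inner_limit: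
  assumes "convex_cluster_point u A" and "((\<lambda>n. u n \<bullet> w) \<longlongrightarrow> l) sequentially"
  shows "A \<bullet> w = l"
proof -
  have "convex_on UNIV (\<lambda>v. v \<bullet> w)" "convex_on UNIV (\<lambda>v. - (v \<bullet> w))"
    by (auto intro!: convex_onI simp: inner_add_left)
  moreover have "continuous_on UNIV (\<lambda>v. v \<bullet> w)" "continuous_on UNIV (\<lambda>v. - (v \<bullet> w))"
    by (auto intro!: continuous_intros)
  ultimately have "A \<bullet> w \<le> l" "- (A \<bullet> w) \<le> - l"
    using convex_cluster_point_le_limit[OF assms(1)] assms(2) tendsto_minus[OF assms(2)] by blast+
  then show ?thesis by simp
qed



section \<open>Gradient flow with rescaled time\<close>

lemma has_real_derivative_comp_gradient:
  assumes "(\<gamma> has_vector_derivative \<gamma>') (at t within S)"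
    and "(f has_derivative (\<lambda>h. g \<bullet> h)) (at (\<gamma> t))"
  shows "((\<lambda>s. f (\<gamma> s)) has_real_derivative g \<bullet> \<gamma>') (at t within S)"
proof -
  have "((\<lambda>s. f (\<gamma> s)) has_derivative (\<lambda>h. g \<bullet> (h *\<^sub>R \<gamma>'))) (at t within S)"
    using has_derivative_compose[OF assms(1)[unfolded has_vector_derivative_def] assms(2)] .
  then show ?thesis unfolding has_field_derivative_def
    by (rule has_derivative_eq_rhs) (auto simp: mult.commute)
qed

lemma has_real_derivative_norm_diff_power2:
  fixes \<gamma> :: "real \<Rightarrow> 'a::real_inner"
  assumes "(\<gamma> has_vector_derivative \<gamma>') (at t within S)"
  shows "((\<lambda>s. (norm (\<gamma> s - q))\<^sup>2) has_real_derivative 2 * ((\<gamma> t - q) \<bullet> \<gamma>')) (at t within S)"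
proof -
  have d: "((\<lambda>s. \<gamma> s - q) has_derivative (\<lambda>h. h *\<^sub>R \<gamma>')) (at t within S)"
    using assms unfolding has_vector_derivative_def by (auto intro!: derivative_eq_intros)
  from has_derivative_inner[OF d d] show ?thesis
    unfolding has_field_derivative_def power2_norm_eq_inner
    by (rule has_derivative_eq_rhs) (auto simp: inner_commute algebra_simps)
qed

locale rescaled_gradient_flow =
  fixes f :: "'a::{real_inner,complete_space} \<Rightarrow> real"
    and gradf :: "'a \<Rightarrow> 'a"
    and t0 :: real
    and \<tau> \<tau>' :: "real \<Rightarrow> real"
    and z :: "real \<Rightarrow> 'a"
  assumes convex: "convex_on UNIV f"
    and gradient: "\<And>u. (f has_derivative (\<lambda>h. gradf u \<bullet> h)) (at u)"
    and argmin_nonempty: "argmin_set f \<noteq> {}"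
    and tau_deriv: "\<And>t. t \<ge> t0 \<Longrightarrow> (\<tau> has_real_derivative \<tau>' t) (at t within {t0..})"
    and tau'_pos: "\<And>t. t \<ge> t0 \<Longrightarrow> \<tau>' t > 0"
    and tau_at_top: "filterlim \<tau> at_top at_top"
    and flow: "\<And>t. t \<ge> t0 \<Longrightarrow> (z has_vector_derivative - \<tau>' t *\<^sub>R gradf (z t)) (at t within {t0..})"
begin

lemma gradient_inequality: "f u + gradf u \<bullet> (v - u) \<le> f v"
  by (rule convex_on_gradient_inequality[OF convex gradient])

lemma continuous_on_f: "continuous_on UNIV f"
  by (rule continuous_at_imp_continuous_on) (auto intro: has_derivative_continuous[OF gradient])

lemma Inf_range_le: "Inf (range f) \<le> f v"
  using argmin_nonempty by (intro cInf_lower) (auto simp: argmin_set_def intro: bdd_belowI2)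

lemma argmin_value: "q \<in> argmin_set f \<Longrightarrow> f q = Inf (range f)"
  by (rule cInf_eq_minimum[symmetric]) (auto simp: argmin_set_def)

lemma tau_mono:
  assumes "t0 \<le> s" "s \<le> t"
  shows "\<tau> s \<le> \<tau> t"
proof -
  have "(\<lambda>u. - \<tau> u) t \<le> (\<lambda>u. - \<tau> u) s"
  proof (rule DERIV_within_nonpos_imp_nonincreasing[OF assms])
    fix u assume "s \<le> u" "u \<le> t"
    with assms have "t0 \<le> u" by simp
    then show "((\<lambda>u. - \<tau> u) has_real_derivative - \<tau>' u) (at u within {t0..})" "- \<tau>' u \<le> 0"
      using DERIV_minus[OF tau_deriv] tau'_pos by (auto simp: less_imp_le)
  qed
  then show ?thesis by simp
qed

lemma value_antimono:
  assumes "t0 \<le> s" "s \<le> t"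
  shows "f (z t) \<le> f (z s)"
proof (rule DERIV_within_nonpos_imp_nonincreasing[OF assms])
  fix u assume "s \<le> u" "u \<le> t"
  with assms have "t0 \<le> u" by simp
  then show "((\<lambda>s. f (z s)) has_real_derivative gradf (z u) \<bullet> (- \<tau>' u *\<^sub>R gradf (z u)))
      (at u within {t0..})"
    and "gradf (z u) \<bullet> (- \<tau>' u *\<^sub>R gradf (z u)) \<le> 0"
    using has_real_derivative_comp_gradient[OF flow gradient] tau'_pos[of u] by auto
qed

text \<open>With \<open>h = \<parallel>z - q\<parallel>\<^sup>2\<close>, convexity gives \<open>h' = -2\<tau>' \<langle>z - q, \<nabla>f(z)\<rangle> \<le> -2\<tau>' (f(z) - min f)\<close>,
  and \<open>f(z)\<close> is nonincreasing.\<close>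

lemma dist_minimizer_estimate:
  assumes q: "q \<in> argmin_set f" and st: "t0 \<le> s" "s \<le> t"
  shows "2 * ((\<tau> t - \<tau> s) * (f (z t) - Inf (range f)))
    \<le> (norm (z s - q))\<^sup>2 - (norm (z t - q))\<^sup>2"
proof -
  let ?c = "f (z t) - Inf (range f)"
  have "(\<lambda>u. (norm (z u - q))\<^sup>2 + (2 * ?c) * \<tau> u) t \<le> (\<lambda>u. (norm (z u - q))\<^sup>2 + (2 * ?c) * \<tau> u) s"
  proof (rule DERIV_within_nonpos_imp_nonincreasing[OF st])
    fix u assume u: "s \<le> u" "u \<le> t"
    with st have "u \<ge> t0" by simp
    then show "((\<lambda>u. (norm (z u - q))\<^sup>2 + (2 * ?c) * \<tau> u) has_real_derivative
        2 * ((z u - q) \<bullet> (- \<tau>' u *\<^sub>R gradf (z u))) + (2 * ?c) * \<tau>' u) (at u within {t0..})"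
      by (intro DERIV_add has_real_derivative_norm_diff_power2 flow DERIV_cmult tau_deriv)
    have "f (z u) + gradf (z u) \<bullet> (q - z u) \<le> f q" by (rule gradient_inequality)
    then have "?c \<le> (z u - q) \<bullet> gradf (z u)"
      using argmin_value[OF q] value_antimono[OF \<open>u \<ge> t0\<close> u(2)]
      by (simp add: inner_diff_left inner_diff_right inner_commute)
    then have "\<tau>' u * ?c \<le> \<tau>' u * ((z u - q) \<bullet> gradf (z u))"
      using tau'_pos[OF \<open>u \<ge> t0\<close>] by (intro mult_left_mono) auto
    then show "2 * ((z u - q) \<bullet> (- \<tau>' u *\<^sub>R gradf (z u))) + (2 * ?c) * \<tau>' u \<le> 0"
      by (simp add: algebra_simps)
  qed
  then show ?thesis by (simp add: algebra_simps)
qed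

lemma dist_minimizer_antimono:
  assumes "q \<in> argmin_set f" "t0 \<le> s" "s \<le> t"
  shows "norm (z t - q) \<le> norm (z s - q)"
proof -
  have "0 \<le> 2 * ((\<tau> t - \<tau> s) * (f (z t) - Inf (range f)))"
    using tau_mono[OF assms(2,3)] Inf_range_le[of "z t"] by simp
  then have "(norm (z t - q))\<^sup>2 \<le> (norm (z s - q))\<^sup>2"
    using dist_minimizer_estimate[OF assms] by linarith
  then show ?thesis by (rule power2_le_imp_le) simp
qed

lemma dist_minimizer_tendsto:
  assumes "q \<in> argmin_set f"
  shows "\<exists>L. ((\<lambda>t. (norm (z t - q))\<^sup>2) \<longlongrightarrow> L) at_top \<and> (\<forall>t\<ge>t0. L \<le> (norm (z t - q))\<^sup>2)"
  using dist_minimizer_antimono[OF assms]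
  by (intro nonincreasing_bounded_below_tendsto_at_top[where b=0]) (auto intro: power_mono)

lemma bounded_trajectory: "\<exists>B. \<forall>t\<ge>t0. norm (z t) \<le> B"
proof -
  obtain q where q: "q \<in> argmin_set f" using argmin_nonempty by blast
  have "norm (z t) \<le> norm q + norm (z t0 - q)" if "t0 \<le> t" for t
    using dist_minimizer_antimono[OF q order_refl that] norm_triangle_ineq[of "z t - q" q] by simp
  then show ?thesis by blast
qed

lemma eventually_tau_gap_less:
  assumes "\<epsilon> > 0"
  shows "eventually (\<lambda>t. \<tau> t * (f (z t) - Inf (range f)) < \<epsilon>) at_top"
proof -
  obtain q where q: "q \<in> argmin_set f" using argmin_nonempty by blast
  define h where "h t = (norm (z t - q))\<^sup>2" for t
  obtain L where L: "(h \<longlongrightarrow> L) at_top" "\<And>t. t \<ge> t0 \<Longrightarrow> L \<le> h t"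
    using dist_minimizer_tendsto[OF q] unfolding h_def by blast
  have "eventually (\<lambda>t. h t < L + \<epsilon>) at_top"
    using \<open>\<epsilon> > 0\<close> by (intro order_tendstoD(2)[OF L(1)]) simp
  then obtain S where S: "S \<ge> t0" "h S < L + \<epsilon>"
    by (metis eventually_at_top_linorder max.cobounded1 max.cobounded2)
  have "eventually (\<lambda>t. \<tau> t \<ge> 2 * \<tau> S) at_top"
    using tau_at_top by (simp add: filterlim_at_top)
  then show ?thesis using eventually_ge_at_top[of S]
  proof eventually_elim
    case (elim t)
    have "\<tau> t * (f (z t) - Inf (range f)) \<le> (2 * (\<tau> t - \<tau> S)) * (f (z t) - Inf (range f))"
      by (rule mult_right_mono) (use elim Inf_range_le in auto)
    also have "\<dots> \<le> h S - h t"
      using dist_minimizer_estimate[OF q S(1) elim(2)] by (simp add: h_def algebra_simps)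
    also have "\<dots> < \<epsilon>" using L(2)[of t] S elim(2) by linarith
    finally show ?case .
  qed
qed

lemma value_tendsto_Inf: "((\<lambda>t. f (z t)) \<longlongrightarrow> Inf (range f)) at_top"
proof (rule order_tendstoI)
  fix y assume "y < Inf (range f)"
  then show "eventually (\<lambda>t. y < f (z t)) at_top"
    using Inf_range_le by (auto intro: always_eventually order.strict_trans2)
next
  fix y assume "Inf (range f) < y"
  have "eventually (\<lambda>t. \<tau> t \<ge> 1) at_top" using tau_at_top by (simp add: filterlim_at_top)
  moreover have "eventually (\<lambda>t. \<tau> t * (f (z t) - Inf (range f)) < y - Inf (range f)) at_top"
    by (rule eventually_tau_gap_less) (use \<open>Inf (range f) < y\<close> in simp)
  ultimately show "eventually (\<lambda>t. f (z t) < y) at_top"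
  proof eventually_elim
    case (elim t)
    have "1 * (f (z t) - Inf (range f)) \<le> \<tau> t * (f (z t) - Inf (range f))"
      by (rule mult_right_mono) (use elim Inf_range_le in auto)
    with elim show ?case by simp
  qed
qed

lemma inner_minimizer_diff_convergent:
  assumes q1: "q1 \<in> argmin_set f" and q2: "q2 \<in> argmin_set f"
  shows "\<exists>l. ((\<lambda>t. z t \<bullet> (q1 - q2)) \<longlongrightarrow> l) at_top"
proof -
  obtain L1 where "((\<lambda>t. (norm (z t - q1))\<^sup>2) \<longlongrightarrow> L1) at_top"
    using dist_minimizer_tendsto[OF q1] by blast
  moreover obtain L2 where "((\<lambda>t. (norm (z t - q2))\<^sup>2) \<longlongrightarrow> L2) at_top"
    using dist_minimizer_tendsto[OF q2] by blast
  ultimately have "((\<lambda>t. ((norm (z t - q2))\<^sup>2 - (norm (z t - q1))\<^sup>2 + q1 \<bullet> q1 - q2 \<bullet> q2) / 2)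
      \<longlongrightarrow> (L2 - L1 + q1 \<bullet> q1 - q2 \<bullet> q2) / 2) at_top"
    by (intro tendsto_intros) auto
  moreover have "((norm (z t - q2))\<^sup>2 - (norm (z t - q1))\<^sup>2 + q1 \<bullet> q1 - q2 \<bullet> q2) / 2
      = z t \<bullet> (q1 - q2)" for t
    by (simp add: power2_norm_eq_inner inner_diff_left inner_diff_right inner_commute)
  ultimately show ?thesis by auto
qed

lemma convex_cluster_point_minimizer:
  assumes "filterlim tn at_top sequentially" and "convex_cluster_point (\<lambda>n. z (tn n)) A"
  shows "A \<in> argmin_set f"
proof -
  have "((\<lambda>n. f (z (tn n))) \<longlongrightarrow> Inf (range f)) sequentially"
    using filterlim_compose[OF value_tendsto_Inf assms(1)] by simp
  then have "f A \<le> Inf (range f)"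
    by (rule convex_cluster_point_le_limit[OF assms(2) convex continuous_on_f])
  then show ?thesis using Inf_range_le by (auto simp: argmin_set_def intro: order_trans)
qed

lemma ex_convex_cluster_point:
  assumes "\<And>n. tn n \<ge> t0"
  shows "\<exists>A. convex_cluster_point (\<lambda>n. z (tn n)) A"
proof (rule bounded_imp_ex_convex_cluster_point)
  obtain B where "\<And>t. t \<ge> t0 \<Longrightarrow> norm (z t) \<le> B" using bounded_trajectory by blast
  with assms show "bounded (range (\<lambda>n. z (tn n)))" by (auto simp: bounded_iff)
qed

text \<open>Opial's argument: two cluster points \<open>A\<^sub>1, A\<^sub>2\<close> are minimizers, so \<open>\<langle>z, A\<^sub>1 - A\<^sub>2\<rangle>\<close> converges,
  and its limit equals both \<open>\<langle>A\<^sub>1, A\<^sub>1 - A\<^sub>2\<rangle>\<close> and \<open>\<langle>A\<^sub>2, A\<^sub>1 - A\<^sub>2\<rangle>\<close>.\<close>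

lemma convex_cluster_points_eq:
  assumes t1: "filterlim t1 at_top sequentially" and A1: "convex_cluster_point (\<lambda>n. z (t1 n)) A1"
    and t2: "filterlim t2 at_top sequentially" and A2: "convex_cluster_point (\<lambda>n. z (t2 n)) A2"
  shows "A1 = A2"
proof -
  obtain l where l: "((\<lambda>t. z t \<bullet> (A1 - A2)) \<longlongrightarrow> l) at_top"
    using inner_minimizer_diff_convergent[OF convex_cluster_point_minimizer[OF t1 A1]
        convex_cluster_point_minimizer[OF t2 A2]] ..
  have "A1 \<bullet> (A1 - A2) = l" "A2 \<bullet> (A1 - A2) = l"
    using convex_cluster_point_inner_limit[OF A1 filterlim_compose[OF l t1]]
      convex_cluster_point_inner_limit[OF A2 filterlim_compose[OF l t2]] by simp_all
  then have "(A1 - A2) \<bullet> (A1 - A2) = 0" by (simp add: inner_diff_left)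
  then show ?thesis by simp
qed

lemma weakly_tendsto_minimizer: "\<exists>A\<in>argmin_set f. weakly_tendsto_at_top z A"
proof -
  define t1 where "t1 n = t0 + real n" for n
  have t1: "filterlim t1 at_top sequentially"
    unfolding t1_def by (rule filterlim_tendsto_add_at_top[OF tendsto_const filterlim_real_sequentially])
  obtain A where A: "convex_cluster_point (\<lambda>n. z (t1 n)) A"
    using ex_convex_cluster_point[of t1] by (auto simp: t1_def)
  have upper: "eventually (\<lambda>t. (z t - A) \<bullet> w < e) at_top" if "e > 0" for w e
  proof (rule ccontr)
    assume "\<not> eventually (\<lambda>t. (z t - A) \<bullet> w < e) at_top"
    then have "\<exists>t\<ge>N. e \<le> (z t - A) \<bullet> w" for N
      by (auto simp: eventually_at_top_linorder not_less)
    then have "\<forall>n. \<exists>t\<ge>max t0 (real n). e \<le> (z t - A) \<bullet> w" by blast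
    then obtain t2 where t2: "\<And>n. t2 n \<ge> max t0 (real n)" "\<And>n. e \<le> (z (t2 n) - A) \<bullet> w"
      by metis
    have t2_lim: "filterlim t2 at_top sequentially"
      by (rule filterlim_at_top_mono[OF filterlim_real_sequentially]) (use t2 in auto)
    obtain A2 where A2: "convex_cluster_point (\<lambda>n. z (t2 n)) A2"
      using ex_convex_cluster_point[of t2] t2(1) by fastforce
    have "(z (t2 n) - A) \<bullet> w = w \<bullet> z (t2 n) - A \<bullet> w" for n
      by (metis inner_commute inner_diff_left)
    then have "e + A \<bullet> w \<le> w \<bullet> z (t2 n)" for n
      using t2(2)[of n] by simp
    then have "eventually (\<lambda>n. z (t2 n) \<in> {v. w \<bullet> v \<ge> e + A \<bullet> w}) sequentially"
      by (simp add: always_eventually)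
    then have "A2 \<in> {v. w \<bullet> v \<ge> e + A \<bullet> w}"
      by (rule A2[unfolded convex_cluster_point_def, rule_format,
            OF closed_halfspace_ge convex_halfspace_ge])
    moreover have "A2 = A" by (rule convex_cluster_points_eq[OF t2_lim A2 t1 A])
    ultimately show False using \<open>e > 0\<close> by (simp add: inner_commute)
  qed
  have "((\<lambda>t. z t \<bullet> w) \<longlongrightarrow> A \<bullet> w) at_top" for w
  proof (rule tendstoI)
    fix e :: real assume "e > 0"
    from upper[OF this, of w] upper[OF this, of "- w"]
    show "eventually (\<lambda>t. dist (z t \<bullet> w) (A \<bullet> w) < e) at_top"
      by eventually_elim (simp add: dist_real_def inner_diff_left abs_less_iff)
  qed
  then show ?thesis
    using convex_cluster_point_minimizer[OF t1 A] unfolding weakly_tendsto_at_top_def by blast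
qed

end

section \<open>Averaging the rescaled gradient flow\<close>

locale averaged_rescaled_gradient_flow = rescaled_gradient_flow +
  fixes x x' :: "real \<Rightarrow> 'a::{real_inner,complete_space}"
  assumes tau_pos: "\<And>t. t \<ge> t0 \<Longrightarrow> \<tau> t > 0"
    and x_deriv: "\<And>t. t \<ge> t0 \<Longrightarrow> (x has_vector_derivative x' t) (at t within {t0..})"
    and averaging: "\<And>t. t \<ge> t0 \<Longrightarrow> \<tau> t *\<^sub>R x' t = \<tau>' t *\<^sub>R (z t - x t)"
begin

lemma has_vector_derivative_tau_x:
  assumes "t \<ge> t0"
  shows "((\<lambda>s. \<tau> s *\<^sub>R x s) has_vector_derivative \<tau>' t *\<^sub>R z t) (at t within {t0..})"
proof -
  have "((\<lambda>s. \<tau> s *\<^sub>R x s) has_vector_derivative \<tau> t *\<^sub>R x' t + \<tau>' t *\<^sub>R x t) (at t within {t0..})"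
    by (rule has_vector_derivative_scaleR[OF tau_deriv[OF assms] x_deriv[OF assms]])
  then show ?thesis by (simp add: averaging[OF assms] algebra_simps)
qed

text \<open>By convexity \<open>(\<tau> (f(x) - min f))' = \<tau>' (f(x) + \<langle>\<nabla>f(x), z - x\<rangle> - min f) \<le> \<tau>' (f(z) - min f)\<close>,
  which is eventually below \<open>\<epsilon> \<tau>'/\<tau> = \<epsilon> (ln \<tau>)'\<close>.\<close>

lemma eventually_tau_gap_le_ln:
  assumes "\<epsilon> > 0"
  shows "eventually (\<lambda>t. \<tau> t * (f (x t) - Inf (range f)) \<le> \<epsilon> * ln (\<tau> t)) at_top"
proof -
  obtain N where N: "\<And>t. t \<ge> N \<Longrightarrow> \<tau> t * (f (z t) - Inf (range f)) < \<epsilon> / 2"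
    using eventually_tau_gap_less[of "\<epsilon> / 2"] \<open>\<epsilon> > 0\<close> by (auto simp: eventually_at_top_linorder)
  define T where "T = max N t0"
  define F where "F u = \<tau> u * (f (x u) - Inf (range f))" for u
  define G where "G u = (\<epsilon> / 2) * ln (\<tau> u)" for u
  have F_le: "F t - F T \<le> G t - G T" if "T \<le> t" for t
  proof (rule DERIV_within_le_imp_increment_le[OF _ that,
        where F'="\<lambda>u. \<tau>' u * (f (x u) - Inf (range f)) + \<tau> u * (gradf (x u) \<bullet> x' u)"
          and G'="\<lambda>u. (\<epsilon> / 2) * (1 / \<tau> u * \<tau>' u)"])
    fix u assume "T \<le> u" "u \<le> t"
    then have u: "t0 \<le> u" "N \<le> u" by (auto simp: T_def)
    show "(F has_real_derivative \<tau>' u * (f (x u) - Inf (range f)) + \<tau> u * (gradf (x u) \<bullet> x' u))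
        (at u within {t0..})"
      unfolding F_def[abs_def]
      using DERIV_mult[OF tau_deriv[OF u(1)]
          DERIV_diff[OF has_real_derivative_comp_gradient[OF x_deriv[OF u(1)] gradient] DERIV_const]]
      by (simp add: mult.commute)
    show "(G has_real_derivative (\<epsilon> / 2) * (1 / \<tau> u * \<tau>' u)) (at u within {t0..})"
      unfolding G_def[abs_def]
      by (rule DERIV_cmult[OF DERIV_chain2[OF DERIV_ln_divide[OF tau_pos[OF u(1)]] tau_deriv[OF u(1)]]])
    have pos: "\<tau> u > 0" "\<tau>' u > 0" using tau_pos tau'_pos u by auto
    have "\<tau> u * (gradf (x u) \<bullet> x' u) = \<tau>' u * (gradf (x u) \<bullet> (z u - x u))"
      using arg_cong[OF averaging[OF u(1)], of "inner (gradf (x u))"] by simp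
    then have "\<tau>' u * (f (x u) - Inf (range f)) + \<tau> u * (gradf (x u) \<bullet> x' u)
        = \<tau>' u * (f (x u) + gradf (x u) \<bullet> (z u - x u) - Inf (range f))"
      by (simp add: algebra_simps)
    also have "\<dots> \<le> \<tau>' u * (f (z u) - Inf (range f))"
      using gradient_inequality pos by (intro mult_left_mono) auto
    also have "\<dots> \<le> \<tau>' u * ((\<epsilon> / 2) / \<tau> u)"
      using N[OF u(2)] pos by (intro mult_left_mono) (auto simp: field_simps)
    finally show "\<tau>' u * (f (x u) - Inf (range f)) + \<tau> u * (gradf (x u) \<bullet> x' u)
        \<le> (\<epsilon> / 2) * (1 / \<tau> u * \<tau>' u)" by (simp add: ac_simps)
  qed (simp add: T_def)
  have "filterlim (\<lambda>t. ln (\<tau> t)) at_top at_top"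
    by (rule filterlim_compose[OF ln_at_top tau_at_top])
  then have "eventually (\<lambda>t. ln (\<tau> t) \<ge> (2 / \<epsilon>) * (F T - G T)) at_top"
    by (simp add: filterlim_at_top)
  then show ?thesis using eventually_ge_at_top[of T]
  proof eventually_elim
    case (elim t)
    have "F t \<le> G t + (F T - G T)" using F_le[OF elim(2)] by simp
    also have "F T - G T \<le> (\<epsilon> / 2) * ln (\<tau> t)" using elim(1) \<open>\<epsilon> > 0\<close> by (simp add: field_simps)
    finally show ?case by (simp add: F_def G_def)
  qed
qed

lemma gap_smallo_ln_tau: "(\<lambda>t. f (x t) - Inf (range f)) \<in> o(\<lambda>t. ln (\<tau> t) / \<tau> t)"
proof (rule landau_o.smallI)
  fix c :: real assume "c > 0"
  have "eventually (\<lambda>t. \<tau> t > 1) at_top" using tau_at_top by (simp add: filterlim_at_top_dense)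
  then show "eventually (\<lambda>t. norm (f (x t) - Inf (range f)) \<le> c * norm (ln (\<tau> t) / \<tau> t)) at_top"
    using eventually_tau_gap_le_ln[OF \<open>c > 0\<close>]
  proof eventually_elim
    case (elim t)
    then have "\<tau> t > 0" "ln (\<tau> t) > 0" by auto
    moreover have "f (x t) - Inf (range f) \<le> c * (ln (\<tau> t) / \<tau> t)"
      using elim(2) \<open>\<tau> t > 0\<close> by (simp add: field_simps)
    ultimately show ?case using Inf_range_le[of "x t"] by simp
  qed
qed

lemma average_weakly_tendsto_minimizer: "\<exists>A\<in>argmin_set f. weakly_tendsto_at_top x A"
proof -
  obtain A where A: "A \<in> argmin_set f" "weakly_tendsto_at_top z A"
    using weakly_tendsto_minimizer by blast
  have deriv: "((\<lambda>s. \<tau> s * (x s \<bullet> w)) has_real_derivative \<tau>' t * (z t \<bullet> w)) (at t within {t0..})"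
    if "t0 \<le> t" for t w
  proof -
    have "((\<lambda>s. (\<tau> s *\<^sub>R x s) \<bullet> w) has_real_derivative (\<tau>' t *\<^sub>R z t) \<bullet> w) (at t within {t0..})"
      using has_derivative_inner_left[OF has_vector_derivative_tau_x[OF that, unfolded has_vector_derivative_def]]
      unfolding has_field_derivative_def by (rule has_derivative_eq_rhs) (auto simp: mult.commute)
    then show ?thesis by simp
  qed
  have "((\<lambda>t. x t \<bullet> w) \<longlongrightarrow> A \<bullet> w) at_top" for w
    using weighted_average_tendsto[OF deriv tau_deriv tau_pos tau'_pos tau_at_top] A(2)
    unfolding weakly_tendsto_at_top_def by blast
  with A(1) show ?thesis unfolding weakly_tendsto_at_top_def by blast
qed

end

section \<open>The second-order dynamics\<close>

lemma second_order_ode_imp_rescaled_flow: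
  fixes x x' x'' :: "real \<Rightarrow> 'a::real_normed_vector"
  assumes pos: "\<tau> t > 0" "\<tau>' t > 0"
    and tau_d1: "(\<tau> has_real_derivative \<tau>' t) (at t within S)"
    and tau_d2: "(\<tau>' has_real_derivative \<tau>'' t) (at t within S)"
    and x_d1: "(x has_vector_derivative x' t) (at t within S)"
    and x_d2: "(x' has_vector_derivative x'' t) (at t within S)"
    and ode: "x'' t + ((2 * (\<tau>' t)\<^sup>2 - \<tau> t * \<tau>'' t) / (\<tau> t * \<tau>' t)) *\<^sub>R x' t
      + ((\<tau>' t)\<^sup>2 / \<tau> t) *\<^sub>R g = 0"
  shows "((\<lambda>s. x s + (\<tau> s / \<tau>' s) *\<^sub>R x' s) has_vector_derivative - \<tau>' t *\<^sub>R g) (at t within S)"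
proof -
  let ?k = "(\<tau>' t * \<tau>' t - \<tau> t * \<tau>'' t) / (\<tau>' t * \<tau>' t)"
  let ?c1 = "(2 * (\<tau>' t)\<^sup>2 - \<tau> t * \<tau>'' t) / (\<tau> t * \<tau>' t)"
  let ?c2 = "(\<tau>' t)\<^sup>2 / \<tau> t"
  have "((\<lambda>s. \<tau> s / \<tau>' s) has_real_derivative ?k) (at t within S)"
    using DERIV_divide[OF tau_d1 tau_d2] pos by simp
  then have deriv: "((\<lambda>s. x s + (\<tau> s / \<tau>' s) *\<^sub>R x' s) has_vector_derivative
      x' t + ((\<tau> t / \<tau>' t) *\<^sub>R x'' t + ?k *\<^sub>R x' t)) (at t within S)"
    by (intro has_vector_derivative_add x_d1 has_vector_derivative_scaleR x_d2)
  have x'': "x'' t = - (?c1 *\<^sub>R x' t) - ?c2 *\<^sub>R g"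
    using ode by (simp add: algebra_simps eq_neg_iff_add_eq_0)
  have coeffs: "1 + ?k - (\<tau> t / \<tau>' t) * ?c1 = 0" "(\<tau> t / \<tau>' t) * ?c2 = \<tau>' t"
    using pos by (simp_all add: field_simps power2_eq_square)
  have "x' t + ((\<tau> t / \<tau>' t) *\<^sub>R x'' t + ?k *\<^sub>R x' t)
      = (1 + ?k - (\<tau> t / \<tau>' t) * ?c1) *\<^sub>R x' t - ((\<tau> t / \<tau>' t) * ?c2) *\<^sub>R g"
    unfolding x'' by (simp add: algebra_simps)
  also have "\<dots> = - \<tau>' t *\<^sub>R g" unfolding coeffs by simp
  finally show ?thesis using deriv by simp
qed

theorem mainTheorem10:
  fixes f :: "'a::{real_inner,complete_space} \<Rightarrow> real"
    and gradf :: "'a \<Rightarrow> 'a"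
    and t0 :: real
    and \<tau> \<tau>' \<tau>'' :: "real \<Rightarrow> real"
    and x x' x'' :: "real \<Rightarrow> 'a"
  assumes A: "assumption_A f gradf"
    and t0_pos: "t0 > 0"
    and tau_pos: "\<And>t. t \<ge> t0 \<Longrightarrow> \<tau> t > 0"
    and tau_d1: "\<And>t. t \<ge> t0 \<Longrightarrow> (\<tau> has_real_derivative \<tau>' t) (at t within {t0..})"
    and tau_d2: "\<And>t. t \<ge> t0 \<Longrightarrow> (\<tau>' has_real_derivative \<tau>'' t) (at t within {t0..})"
    and tau_C2: "continuous_on {t0..} \<tau>''"
    and tau'_pos: "\<And>t. t \<ge> t0 \<Longrightarrow> \<tau>' t > 0"
    and tau_lim: "filterlim \<tau> at_top at_top"
    and x_d1: "\<And>t. t \<ge> t0 \<Longrightarrow> (x has_vector_derivative x' t) (at t within {t0..})"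
    and x_d2: "\<And>t. t \<ge> t0 \<Longrightarrow> (x' has_vector_derivative x'' t) (at t within {t0..})"
    and x_C2: "continuous_on {t0..} x''"
    and ode: "\<And>t. t \<ge> t0 \<Longrightarrow>
       x'' t + ((2 * (\<tau>' t)\<^sup>2 - \<tau> t * \<tau>'' t) / (\<tau> t * \<tau>' t)) *\<^sub>R x' t
             + ((\<tau>' t)\<^sup>2 / \<tau> t) *\<^sub>R gradf (x t + (\<tau> t / \<tau>' t) *\<^sub>R x' t) = 0"
  shows "(\<lambda>t. f (x t) - Inf (range f)) \<in> o[at_top](\<lambda>t. ln (\<tau> t) / \<tau> t)
     \<and> (\<exists>z\<in>argmin_set f. weakly_tendsto_at_top x z)
     \<and> (\<forall>\<theta> C1. \<theta> > 0 \<and> C1 > 0 \<and> (\<forall>\<^sub>F t in at_top. \<tau> t \<ge> C1 * (t - t0) powr \<theta>)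
          \<longrightarrow> (\<lambda>t. f (x t) - Inf (range f)) \<in> o[at_top](\<lambda>t. ln t / t powr \<theta>))"
proof -
  define z where "z t = x t + (\<tau> t / \<tau>' t) *\<^sub>R x' t" for t
  interpret averaged_rescaled_gradient_flow f gradf t0 \<tau> \<tau>' z x x'
  proof
    show "(z has_vector_derivative - \<tau>' t *\<^sub>R gradf (z t)) (at t within {t0..})" if "t \<ge> t0" for t
      unfolding z_def[abs_def] using that tau_pos tau'_pos tau_d1 tau_d2 x_d1 x_d2 ode
      by (intro second_order_ode_imp_rescaled_flow) auto
    show "\<tau> t *\<^sub>R x' t = \<tau>' t *\<^sub>R (z t - x t)" if "t \<ge> t0" for t
      using tau'_pos[OF that] by (simp add: z_def)
  qed (use A tau_pos tau_d1 tau'_pos tau_lim x_d1 in \<open>auto simp: assumption_A_def\<close>)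
  have "(\<lambda>t. f (x t) - Inf (range f)) \<in> o(\<lambda>t. ln t / t powr \<theta>)"
    if "\<theta> > 0" "C1 > 0" "\<forall>\<^sub>F t in at_top. \<tau> t \<ge> C1 * (t - t0) powr \<theta>" for \<theta> C1
    using landau_o.small_big_trans[OF gap_smallo_ln_tau ln_div_bigo_of_powr_lower_bound[OF that(3,1,2)]] .
  then show ?thesis using gap_smallo_ln_tau average_weakly_tendsto_minimizer by blast
qed

end
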